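(* Let $N\ge 2$ and $m\ge N$ be integers, let $c_1,\dots,c_m$ be contents with request probabilities $\rho_1,\dots,\rho_m\ge 0$, $\sum_{\ell=1}^m\rho_\ell=1$. Consider users $u_1,\dots,u_N$, where $u_\kappa$ caches exactly $c_\kappa$, and each user $u_\mu$ independently requests a single content $R_\mu$ with $\Pr(R_\mu=c_\ell)=\rho_\ell$. Let $K$ be uniform on $\{1,\dots,N\}$, independent of the requests. Then the probability $\mathcal{P}_{\textup{TX}}$ that $u_K$ operates in a transmitting mode, i.e. in one of the modes SR-HDTX, HDTX or FDTR, is \[ \mathcal{P}_{\textup{TX}} = \frac{1}{N} \sum_{\kappa=1}^{N}\left(1-\left(1-\rho_\kappa\right)^{N-1}\right). \]
   Context: For a user $u_\kappa$, let $S_\kappa$ be the event that there exists $\mu\ne\kappa$, $\mu\in\{1,\dots,N\}$, with $R_\mu=c_\kappa$. Modes of $u_\kappa$: SR-HDTX: $R_\kappa=c_\kappa$ and $S_\kappa$; FDTR: $R_\kappa=c_\mu$ for some $\mu\in\{1,\dots,N\}\setminus\{\kappa\}$, and $S_\kappa$; HDTX: $R_\kappa\notin\{c_1,\dots,c_N\}$ and $S_\kappa$. *)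

theory Defs
  imports "HOL-Probability.Probability"
begin

text \<open>Users are indexed by 1..N; user kappa caches content c kappa; R mu is the content
requested by user mu.\<close>

definition S_event :: "nat \<Rightarrow> (nat \<Rightarrow> 'c) \<Rightarrow> (nat \<Rightarrow> 'c) \<Rightarrow> nat \<Rightarrow> bool" where
  "S_event N c R \<kappa> \<longleftrightarrow> (\<exists>\<mu>\<in>{1..N}. \<mu> \<noteq> \<kappa> \<and> R \<mu> = c \<kappa>)"

definition SR_HDTX :: "nat \<Rightarrow> (nat \<Rightarrow> 'c) \<Rightarrow> (nat \<Rightarrow> 'c) \<Rightarrow> nat \<Rightarrow> bool" where
  "SR_HDTX N c R \<kappa> \<longleftrightarrow> R \<kappa> = c \<kappa> \<and> S_event N c R \<kappa>"

definition FDTR :: "nat \<Rightarrow> (nat \<Rightarrow> 'c) \<Rightarrow> (nat \<Rightarrow> 'c) \<Rightarrow> nat \<Rightarrow> bool" where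
  "FDTR N c R \<kappa> \<longleftrightarrow> (\<exists>\<mu>\<in>{1..N} - {\<kappa>}. R \<kappa> = c \<mu>) \<and> S_event N c R \<kappa>"

definition HDTX :: "nat \<Rightarrow> (nat \<Rightarrow> 'c) \<Rightarrow> (nat \<Rightarrow> 'c) \<Rightarrow> nat \<Rightarrow> bool" where
  "HDTX N c R \<kappa> \<longleftrightarrow> R \<kappa> \<notin> c ` {1..N} \<and> S_event N c R \<kappa>"

definition transmitting :: "nat \<Rightarrow> (nat \<Rightarrow> 'c) \<Rightarrow> (nat \<Rightarrow> 'c) \<Rightarrow> nat \<Rightarrow> bool" where
  "transmitting N c R \<kappa> \<longleftrightarrow> SR_HDTX N c R \<kappa> \<or> HDTX N c R \<kappa> \<or> FDTR N c R \<kappa>"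

definition joint_pmf :: "nat \<Rightarrow> 'c pmf \<Rightarrow> (nat \<times> (nat \<Rightarrow> 'c)) pmf" where
  "joint_pmf N p = pair_pmf (pmf_of_set {1..N}) (Pi_pmf {1..N} undefined (\<lambda>_. p))"

definition P_TX :: "nat \<Rightarrow> (nat \<Rightarrow> 'c) \<Rightarrow> 'c pmf \<Rightarrow> real" where
  "P_TX N c p = measure_pmf.prob (joint_pmf N p) {(k, R). transmitting N c R k}"

end

theory Submission
  imports Defs
begin

text \<open>Whatever content \<open>u\<^sub>\<kappa>\<close> requests, it is in exactly one of the three request cases,
so \<open>u\<^sub>\<kappa>\<close> transmits precisely on the event \<open>S\<^sub>\<kappa>\<close> that another user requests \<open>c\<^sub>\<kappa>\<close>. By
independence of the requests, \<open>S\<^sub>\<kappa>\<close> fails with probability \<open>(1 - \<rho>\<^sub>\<kappa>)^(N-1)\<close>, and averaging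
over the uniform index \<open>K\<close> gives the formula.\<close>

lemma measure_pair_pmf_of_set:
  assumes "finite S" "S \<noteq> {}"
  shows "measure_pmf.prob (pair_pmf (pmf_of_set S) B) E
         = (\<Sum>k\<in>S. measure_pmf.prob B {R. (k, R) \<in> E}) / card S"
proof -
  have card_pos: "0 < real (card S)"
    using assms by (simp add: card_gt_0_iff)
  have "emeasure (pair_pmf (pmf_of_set S) B) E
      = (\<integral>\<^sup>+k. \<integral>\<^sup>+R. indicator E (k, R) \<partial>B \<partial>pmf_of_set S)"
    by (simp add: nn_integral_pair_pmf'[symmetric])
  also have "\<dots> = (\<integral>\<^sup>+k. emeasure B {R. (k, R) \<in> E} \<partial>pmf_of_set S)"
    by (auto intro!: nn_integral_cong simp flip: nn_integral_indicator simp: indicator_def)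
  also have "\<dots> = (\<Sum>k\<in>S. emeasure B {R. (k, R) \<in> E}) / card S"
    using assms by (simp add: nn_integral_pmf_of_set)
  also have "\<dots> = ennreal ((\<Sum>k\<in>S. measure_pmf.prob B {R. (k, R) \<in> E}) / card S)"
    using divide_ennreal[OF sum_nonneg card_pos, of S "\<lambda>k. measure_pmf.prob B {R. (k, R) \<in> E}"]
    by (simp add: measure_pmf.emeasure_eq_measure sum_ennreal ennreal_of_nat_eq_real_of_nat)
  finally show ?thesis
    by (simp add: measure_pmf.emeasure_eq_measure sum_nonneg divide_nonneg_nonneg)
qed

lemma transmitting_iff_S_event: "transmitting N c R \<kappa> \<longleftrightarrow> S_event N c R \<kappa>"
  unfolding transmitting_def SR_HDTX_def HDTX_def FDTR_def by blast

lemma measure_Pi_pmf_other_hits: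
  assumes "finite I" "k \<in> I"
  shows "measure_pmf.prob (Pi_pmf I d (\<lambda>_. p)) {R. \<exists>\<mu>\<in>I. \<mu> \<noteq> k \<and> R \<mu> = x}
         = 1 - (1 - pmf p x) ^ (card I - 1)"
proof -
  define miss where "miss = Pi I (\<lambda>\<mu>. if \<mu> = k then UNIV else - {x})"
  have hits_eq: "{R. \<exists>\<mu>\<in>I. \<mu> \<noteq> k \<and> R \<mu> = x} = UNIV - miss"
    by (auto simp: miss_def Pi_def)
  have "measure_pmf.prob (Pi_pmf I d (\<lambda>_. p)) miss
      = (\<Prod>\<mu>\<in>I. measure_pmf.prob p (if \<mu> = k then UNIV else - {x}))"
    unfolding miss_def using assms(1) by (rule measure_Pi_pmf_Pi)
  also have "\<dots> = (\<Prod>\<mu>\<in>I - {k}. measure_pmf.prob p (UNIV - {x}))"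
    using assms by (simp add: prod.remove Compl_eq_Diff_UNIV)
  also have "\<dots> = (1 - pmf p x) ^ (card I - 1)"
    using assms measure_pmf.prob_compl[of "{x}" p] by (simp add: measure_pmf_single)
  finally show ?thesis
    unfolding hits_eq using measure_pmf.prob_compl[of miss] by simp
qed

theorem corollary1:
  fixes N m :: nat and c :: "nat \<Rightarrow> 'c" and \<rho> :: "nat \<Rightarrow> real" and p :: "'c pmf"
  assumes "N \<ge> 2" and "m \<ge> N"
    and "inj_on c {1..m}"
    and "\<forall>l\<in>{1..m}. \<rho> l \<ge> 0"
    and "(\<Sum>l=1..m. \<rho> l) = 1"
    and "set_pmf p \<subseteq> c ` {1..m}"
    and "\<forall>l\<in>{1..m}. pmf p (c l) = \<rho> l"
  shows "P_TX N c p = (1 / real N) * (\<Sum>\<kappa>=1..N. 1 - (1 - \<rho> \<kappa>) ^ (N - 1))"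
proof -
  let ?R = "Pi_pmf {1..N} undefined (\<lambda>_. p)"
  have transmit_prob: "measure_pmf.prob ?R {R. transmitting N c R \<kappa>} = 1 - (1 - \<rho> \<kappa>) ^ (N - 1)"
    if "\<kappa> \<in> {1..N}" for \<kappa>
    using measure_Pi_pmf_other_hits[of "{1..N}" \<kappa> undefined p "c \<kappa>"] that assms(2,7)
    by (simp add: transmitting_iff_S_event S_event_def)
  have "P_TX N c p = (\<Sum>\<kappa>\<in>{1..N}. measure_pmf.prob ?R {R. transmitting N c R \<kappa>}) / card {1..N}"
    unfolding P_TX_def joint_pmf_def
    using assms(1) by (subst measure_pair_pmf_of_set) auto
  also have "\<dots> = (\<Sum>\<kappa>=1..N. 1 - (1 - \<rho> \<kappa>) ^ (N - 1)) / N"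
    using transmit_prob by simp
  finally show ?thesis by simp
qed

end
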